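(* Let $(E\xrightarrow{Q}K,\gamma)$ be a projected cone with dual projected cone $(F\xrightarrow{P}N,\delta)$, let $\gamma_0\preceq\gamma$ be a face and $\delta_0:=\gamma_0^{*}$. Then the following are equivalent: (i) $P$ maps $\mathrm{lin}(\delta_0)\cap F$ onto $N$; (ii) $Q$ maps $\mathrm{lin}(\gamma_0)\cap E$ isomorphically onto a primitive sublattice of $K$.
   Context: Lattices are finitely generated free abelian groups, $E_{\mathbb Q}:=\mathbb Q\otimes E$; $\mathrm{lin}$ denotes linear span; a sublattice $K_0\subset K$ is primitive if $K/K_0$ is torsion free. A projected cone $(E\xrightarrow{Q}K,\gamma)$ is a surjective lattice homomorphism $Q\colon E\to K$ with a simplicial full-dimensional convex polyhedral cone $\gamma\subset E_{\mathbb Q}$. Its dual projected cone $(F\xrightarrow{P}N,\delta)$: $M:=\ker Q$, $F:=\mathrm{Hom}(E,\mathbb Z)$, $N:=\mathrm{Hom}(M,\mathbb Z)$, $P\colon F\to N$ restriction, $\delta:=\gamma^\vee$. For $\gamma_0\preceq\gamma$, $\gamma_0^*:=\gamma_0^\perp\cap\delta$. *)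

theory Defs
  imports "HOL-Analysis.Analysis"
begin

text \<open>Lattice points Z^n inside the real vector space real^'n (the ambient Q-space E_Q
  is realised inside R^n; all cones are rational, so nothing is lost).\<close>
definition lattice_pts :: "(real^'n) set" where
  "lattice_pts = {x. \<forall>i. x $ i \<in> \<int>}"

definition rational_pts :: "(real^'n) set" where
  "rational_pts = {x. \<forall>i. x $ i \<in> \<rat>}"

definition gen_cone :: "(real^'n) set \<Rightarrow> (real^'n) set" where
  "gen_cone B = {\<Sum>b\<in>B. c b *\<^sub>R b | c. \<forall>b\<in>B. 0 \<le> c b}"

definition simplicial_full_cone :: "(real^'n) set \<Rightarrow> bool" where
  "simplicial_full_cone \<gamma> \<longleftrightarrow>
     (\<exists>B. finite B \<and> independent B \<and> span B = UNIV \<and> B \<subseteq> rational_pts \<and> \<gamma> = gen_cone B)"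

text \<open>Dual cone, with F = Hom(E,Z) identified with Z^n via the standard pairing.\<close>
definition dual_cone :: "(real^'n) set \<Rightarrow> (real^'n) set" where
  "dual_cone \<gamma> = {f. \<forall>x\<in>\<gamma>. 0 \<le> f \<bullet> x}"

definition face_star :: "(real^'n) set \<Rightarrow> (real^'n) set \<Rightarrow> (real^'n) set" where
  "face_star \<gamma> \<gamma>0 = {f \<in> dual_cone \<gamma>. \<forall>x\<in>\<gamma>0. f \<bullet> x = 0}"

text \<open>A sublattice K0 of K is primitive iff K/K0 is torsion free.\<close>
definition primitive_in :: "('a::real_vector) set \<Rightarrow> 'a set \<Rightarrow> bool" where
  "primitive_in K0 K \<longleftrightarrow> K0 \<subseteq> K \<and>
     (\<forall>x\<in>K. \<forall>m::int. m \<noteq> 0 \<longrightarrow> of_int m *\<^sub>R x \<in> K0 \<longrightarrow> x \<in> K0)"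

end

theory Submission
  imports Defs
begin

text \<open>
  Write L for the lattice points of lin(gamma0) and M for those of ker Q. As K = Q E is E/M,
  condition (ii) says that L and M meet trivially and that L + M is saturated in E. For a
  simplicial rational cone, the lattice points of lin(gamma0^*) are exactly the integral
  functionals vanishing on L: expand such a functional in the basis dual to the generators,
  and note that a generator outside the face has coefficient zero in every point of the face.
  So (i) says that every homomorphism M \<rightarrow> Z extends to an integral functional vanishing
  on L.

  If L + M is a saturated direct sum, extend the homomorphism by zero on L and then to all
  of E: homomorphisms on saturated sublattices extend, by induction on the rank, splitting off
  a vector v with f v = 1 for some integral f. Conversely, extending the coordinate functions
  of M shows that L and M meet trivially and that m x = l + y forces y to be divisible by m,
  which gives saturation.
\<close>

section \<open>Extending homomorphisms from saturated sublattices\<close>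

lemma lattice_pts_0 [simp]: "0 \<in> lattice_pts"
  by (simp add: lattice_pts_def)

lemma lattice_pts_add: "x \<in> lattice_pts \<Longrightarrow> y \<in> lattice_pts \<Longrightarrow> x + y \<in> lattice_pts"
  by (auto simp: lattice_pts_def)

lemma lattice_pts_diff: "x \<in> lattice_pts \<Longrightarrow> y \<in> lattice_pts \<Longrightarrow> x - y \<in> lattice_pts"
  by (auto simp: lattice_pts_def)

lemma lattice_pts_scale: "x \<in> lattice_pts \<Longrightarrow> of_int k *\<^sub>R x \<in> lattice_pts"
  by (auto simp: lattice_pts_def)

lemma lattice_pts_axis: "axis i 1 \<in> lattice_pts"
  by (auto simp: lattice_pts_def axis_def)

lemma lattice_pts_inner: "x \<in> lattice_pts \<Longrightarrow> y \<in> lattice_pts \<Longrightarrow> x \<bullet> y \<in> \<int>"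
  unfolding lattice_pts_def inner_vec_def by (auto intro!: Ints_mult)

lemma lattice_pts_content:
  fixes s :: "real^'n"
  assumes s: "s \<in> lattice_pts" "s \<noteq> 0"
  obtains f and g :: int
  where "f \<in> lattice_pts" "g > 0" "f \<bullet> s = of_int g" "(1 / of_int g) *\<^sub>R s \<in> lattice_pts"
proof -
  define attained where "attained n \<longleftrightarrow> 0 < n \<and> (\<exists>f\<in>lattice_pts. f \<bullet> s = of_nat n)" for n :: nat
  obtain i where "s $ i \<noteq> 0"
    using s(2) by (auto simp: vec_eq_iff)
  moreover obtain a where a: "s $ i = of_int a"
    using s(1) by (auto simp: lattice_pts_def elim: Ints_cases)
  ultimately have "attained (nat \<bar>a\<bar>)"
    unfolding attained_def
    by (intro conjI bexI[of _ "of_int (sgn a) *\<^sub>R axis i 1"] lattice_pts_scale lattice_pts_axis)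
       (auto simp: inner_axis' sgn_if)
  define g where "g = (LEAST n. attained n)"
  have "attained g"
    unfolding g_def by (rule LeastI) fact
  then obtain f where f: "f \<in> lattice_pts" "f \<bullet> s = of_nat g" and "g > 0"
    unfolding attained_def by auto
  have dvd: "int g dvd c" if "s $ j = of_int c" for j c
  proof (rule ccontr)
    assume "\<not> int g dvd c"
    then have r: "0 < c mod int g" "c mod int g < int g"
      using \<open>g > 0\<close> by (simp_all add: dvd_eq_mod_eq_0 order_le_neq_trans)
    \<comment> \<open>c mod g would be a smaller attained value\<close>
    have "(axis j 1 - of_int (c div int g) *\<^sub>R f) \<bullet> s = of_int (c mod int g)"
      using that f(2) by (simp add: inner_diff_left inner_axis' minus_div_mult_eq_mod [symmetric])
    then have "attained (nat (c mod int g))"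
      unfolding attained_def using r
      by (intro conjI bexI[of _ "axis j 1 - of_int (c div int g) *\<^sub>R f"]
               lattice_pts_diff lattice_pts_axis lattice_pts_scale f(1)) auto
    then have "g \<le> nat (c mod int g)"
      unfolding g_def by (rule Least_le)
    with r show False by linarith
  qed
  have "(1 / of_nat g) *\<^sub>R s \<in> lattice_pts"
    unfolding lattice_pts_def
  proof (intro CollectI allI)
    fix j
    obtain c where c: "s $ j = of_int c"
      using s(1) by (auto simp: lattice_pts_def elim: Ints_cases)
    with dvd obtain e where "c = int g * e" by blast
    then show "((1 / of_nat g) *\<^sub>R s) $ j \<in> \<int>"
      using c \<open>g > 0\<close> by simp
  qed
  with f \<open>g > 0\<close> show thesis
    by (intro that[of f "int g"]) auto
qed

definition lattice_submodule :: "(real^'n) set \<Rightarrow> bool" where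
  "lattice_submodule S \<longleftrightarrow> S \<subseteq> lattice_pts \<and> 0 \<in> S \<and> (\<forall>x\<in>S. \<forall>y\<in>S. x + y \<in> S) \<and>
     (\<forall>x\<in>S. \<forall>k::int. of_int k *\<^sub>R x \<in> S)"

lemma lattice_submoduleD:
  assumes "lattice_submodule S"
  shows "S \<subseteq> lattice_pts" "0 \<in> S" "x \<in> S \<Longrightarrow> y \<in> S \<Longrightarrow> x + y \<in> S"
    "x \<in> S \<Longrightarrow> of_int k *\<^sub>R x \<in> S"
  using assms by (auto simp: lattice_submodule_def)

lemma lattice_submodule_diff:
  assumes "lattice_submodule S" "x \<in> S" "y \<in> S"
  shows "x - y \<in> S"
  using lattice_submoduleD(3)[OF assms(1,2) lattice_submoduleD(4)[OF assms(1,3), of "-1"]] by simp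

lemma lattice_submodule_lattice_pts: "lattice_submodule lattice_pts"
  by (simp add: lattice_submodule_def lattice_pts_add lattice_pts_scale)

lemma lattice_submodule_Int_subspace:
  "lattice_submodule S \<Longrightarrow> subspace V \<Longrightarrow> lattice_submodule (S \<inter> V)"
  by (auto simp: lattice_submodule_def subspace_def)

lemma primitive_in_Int_subspace:
  assumes "primitive_in S K" "subspace V"
  shows "primitive_in (S \<inter> V) K"
  unfolding primitive_in_def
proof (intro conjI ballI allI impI)
  show "S \<inter> V \<subseteq> K"
    using assms(1) by (auto simp: primitive_in_def)
  fix x and m :: int
  assume "x \<in> K" "m \<noteq> 0" "of_int m *\<^sub>R x \<in> S \<inter> V"
  then show "x \<in> S \<inter> V"
    using assms subspace_mul[OF assms(2), of "of_int m *\<^sub>R x" "1 / of_int m"]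
    by (auto simp: primitive_in_def)
qed

lemma primitive_inD:
  "primitive_in S K \<Longrightarrow> x \<in> K \<Longrightarrow> m \<noteq> 0 \<Longrightarrow> of_int m *\<^sub>R x \<in> S \<Longrightarrow> x \<in> S"
  unfolding primitive_in_def by blast

lemma primitive_in_lattice_pts: "primitive_in lattice_pts lattice_pts"
  by (simp add: primitive_in_def)

lemma additive_of_int_scale:
  assumes S: "lattice_submodule S" and v: "v \<in> S"
    and add: "\<forall>x\<in>S. \<forall>y\<in>S. \<phi> (x + y) = \<phi> x + (\<phi> y :: int)"
  shows "\<phi> (of_int k *\<^sub>R v) = k * \<phi> v"
proof (induction k rule: int_induct[where k = 0])
  case base
  have "\<phi> (0 + 0) = \<phi> 0 + \<phi> 0"
    using add lattice_submoduleD(2)[OF S] by blast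
  then show ?case
    by simp
next
  case (step1 i)
  have "of_int (i + 1) *\<^sub>R v = of_int i *\<^sub>R v + v"
    by (simp add: algebra_simps)
  then show ?case
    using step1 add v lattice_submoduleD(4)[OF S v] by (simp add: algebra_simps)
next
  case (step2 i)
  have "of_int i *\<^sub>R v = of_int (i - 1) *\<^sub>R v + v"
    by (simp add: algebra_simps)
  then have "\<phi> (of_int i *\<^sub>R v) = \<phi> (of_int (i - 1) *\<^sub>R v) + \<phi> v"
    using add v lattice_submoduleD(4)[OF S v] by metis
  then show ?case
    using step2 by (simp add: algebra_simps)
qed

lemma primitive_submodule_unimodular_vector:
  assumes S: "lattice_submodule S" "primitive_in S lattice_pts" and s: "s \<in> S" "s \<noteq> 0"
  obtains v f where "v \<in> S" "f \<in> lattice_pts" "f \<bullet> v = 1"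
proof -
  obtain f and g :: int where f: "f \<in> lattice_pts" and g: "g > 0" "f \<bullet> s = of_int g"
    and v: "(1 / of_int g) *\<^sub>R s \<in> lattice_pts"
    using lattice_pts_content[of s] s lattice_submoduleD(1)[OF S(1)] by blast
  have "(1 / of_int g) *\<^sub>R s \<in> S"
    using primitive_inD[OF S(2) v, of g] g s by simp
  moreover have "f \<bullet> ((1 / of_int g) *\<^sub>R s) = 1"
    using g by simp
  ultimately show thesis
    using f that by blast
qed

lemma hom_extends_across_unimodular:
  assumes S: "lattice_submodule S"
    and add: "\<forall>x\<in>S. \<forall>y\<in>S. \<phi> (x + y) = \<phi> x + (\<phi> y :: int)"
    and v: "v \<in> S" and f: "f \<in> lattice_pts" "f \<bullet> v = 1"
    and h1: "h1 \<in> lattice_pts" "\<forall>x\<in>S. f \<bullet> x = 0 \<longrightarrow> h1 \<bullet> x = of_int (\<phi> x)"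
  shows "\<exists>h\<in>lattice_pts. \<forall>x\<in>S. h \<bullet> x = of_int (\<phi> x)"
proof -
  have SL: "S \<subseteq> lattice_pts"
    using S by (rule lattice_submoduleD)
  obtain c where c: "h1 \<bullet> v = of_int c"
    using lattice_pts_inner[OF h1(1)] v SL by (meson Ints_cases subsetD)
  define h where "h = h1 + of_int (\<phi> v - c) *\<^sub>R f"
  have "h \<bullet> x = of_int (\<phi> x)" if x: "x \<in> S" for x
  proof -
    obtain k where k: "f \<bullet> x = of_int k"
      using lattice_pts_inner[OF f(1)] x SL by (meson Ints_cases subsetD)
    define x1 where "x1 = x - of_int k *\<^sub>R v"
    have kv: "of_int k *\<^sub>R v \<in> S" and x1: "x1 \<in> S"
      unfolding x1_def using S x v by (auto intro: lattice_submodule_diff lattice_submoduleD(4))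
    have "f \<bullet> x1 = 0"
      unfolding x1_def using k f(2) by (simp add: inner_diff_right)
    then have "h \<bullet> x1 = of_int (\<phi> x1)"
      unfolding h_def using h1(2) x1 by (simp add: inner_add_left)
    moreover have "h \<bullet> v = of_int (\<phi> v)"
      unfolding h_def using c f(2) by (simp add: inner_add_left)
    moreover have "\<phi> x = k * \<phi> v + \<phi> x1"
      using add kv x1 additive_of_int_scale[OF S v add, of k] by (metis x1_def diff_add_cancel add.commute)
    ultimately show ?thesis
      unfolding x1_def by (simp add: inner_diff_right)
  qed
  moreover have "h \<in> lattice_pts"
    unfolding h_def by (intro lattice_pts_add lattice_pts_scale f(1) h1(1))
  ultimately show ?thesis
    by blast
qed

lemma primitive_submodule_hom_extends:
  assumes "lattice_submodule S" "primitive_in S lattice_pts"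
    and "\<forall>x\<in>S. \<forall>y\<in>S. \<phi> (x + y) = \<phi> x + (\<phi> y :: int)"
  shows "\<exists>h\<in>lattice_pts. \<forall>x\<in>S. h \<bullet> x = of_int (\<phi> x)"
  using assms
proof (induction "dim S" arbitrary: S rule: less_induct)
  case less
  note S = less.prems(1,2) and add = less.prems(3)
  show ?case
  proof (cases "S \<subseteq> {0}")
    case True
    have "\<phi> 0 = 0"
      using additive_of_int_scale[OF S(1) lattice_submoduleD(2)[OF S(1)] add, of 0] by simp
    with True show ?thesis
      by (intro bexI[of _ 0]) auto
  next
    case False
    then obtain s where "s \<in> S" "s \<noteq> 0"
      by auto
    then obtain v f where v: "v \<in> S" and f: "f \<in> lattice_pts" "f \<bullet> v = 1"
      using primitive_submodule_unimodular_vector S by metis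
    define S1 where "S1 = S \<inter> {x. f \<bullet> x = 0}"
    have sub: "subspace {x. f \<bullet> x = 0}"
      by (auto simp: subspace_def inner_add_right)
    have "span S1 \<subset> span S"
    proof
      show "span S1 \<subseteq> span S"
        by (rule span_mono) (auto simp: S1_def)
      have "span S1 \<subseteq> {x. f \<bullet> x = 0}"
        unfolding S1_def using sub by (intro span_minimal) auto
      then show "span S1 \<noteq> span S"
        using f(2) v span_base[of v S] by auto
    qed
    then have "dim S1 < dim S"
      by (rule dim_psubset)
    moreover have "lattice_submodule S1" "primitive_in S1 lattice_pts"
      unfolding S1_def using S sub by (simp_all add: lattice_submodule_Int_subspace primitive_in_Int_subspace)
    ultimately obtain h1 where "h1 \<in> lattice_pts" "\<forall>x\<in>S1. h1 \<bullet> x = of_int (\<phi> x)"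
      using less.hyps add by (metis IntD1 S1_def)
    then show ?thesis
      using hom_extends_across_unimodular[OF S(1) add v f] by (auto simp: S1_def)
  qed
qed

section \<open>Saturated direct sums\<close>

lemma lattice_submodule_set_plus:
  assumes L: "lattice_submodule L" and M: "lattice_submodule M"
  shows "lattice_submodule (L + M)"
  unfolding lattice_submodule_def
proof (intro conjI ballI allI)
  show "L + M \<subseteq> lattice_pts"
    using lattice_submoduleD(1)[OF L] lattice_submoduleD(1)[OF M]
    by (auto simp: set_plus_def intro: lattice_pts_add)
  show "0 \<in> L + M"
    using lattice_submoduleD(2)[OF L] lattice_submoduleD(2)[OF M] set_plus_intro by fastforce
next
  fix x y assume "x \<in> L + M" "y \<in> L + M"
  then obtain l1 y1 l2 y2 where "l1 \<in> L" "l2 \<in> L" "y1 \<in> M" "y2 \<in> M" "x = l1 + y1" "y = l2 + y2"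
    by (auto elim!: set_plus_elim)
  then have "x + y = (l1 + l2) + (y1 + y2)"
    by (simp add: algebra_simps)
  then show "x + y \<in> L + M"
    using \<open>l1 \<in> L\<close> \<open>l2 \<in> L\<close> \<open>y1 \<in> M\<close> \<open>y2 \<in> M\<close>
    by (simp add: set_plus_intro lattice_submoduleD(3)[OF L] lattice_submoduleD(3)[OF M])
next
  fix x and k :: int assume "x \<in> L + M"
  then obtain l y where "l \<in> L" "y \<in> M" "x = l + y"
    by (auto elim!: set_plus_elim)
  then show "of_int k *\<^sub>R x \<in> L + M"
    using lattice_submoduleD(4)[OF L] lattice_submoduleD(4)[OF M]
    by (simp add: scaleR_add_right set_plus_intro)
qed

lemma additive_extend_by_zero_on_direct_sum:
  assumes L: "lattice_submodule L" and M: "lattice_submodule M" and disj: "L \<inter> M \<subseteq> {0}"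
    and add: "\<forall>x\<in>M. \<forall>y\<in>M. \<phi> (x + y) = \<phi> x + (\<phi> y :: int)"
  obtains \<psi> where "\<forall>s\<in>L + M. \<forall>t\<in>L + M. \<psi> (s + t) = \<psi> s + (\<psi> t :: int)"
    and "\<And>l y. l \<in> L \<Longrightarrow> y \<in> M \<Longrightarrow> \<psi> (l + y) = \<phi> y"
proof -
  define \<psi> where "\<psi> s = \<phi> (THE y. y \<in> M \<and> s - y \<in> L)" for s
  have \<psi>: "\<psi> (l + y) = \<phi> y" if "l \<in> L" "y \<in> M" for l y
  proof -
    have "y' = y" if "y' \<in> M" "l + y - y' \<in> L" for y'
    proof -
      have "y - y' = (l + y - y') - l"
        by simp
      then have "y - y' \<in> L \<inter> M"
        using that \<open>l \<in> L\<close> \<open>y \<in> M\<close> L M by (metis IntI lattice_submodule_diff)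
      then show ?thesis
        using disj by auto
    qed
    then have "(THE y'. y' \<in> M \<and> l + y - y' \<in> L) = y"
      using that by (intro the_equality) auto
    then show ?thesis
      by (simp add: \<psi>_def)
  qed
  have "\<forall>s\<in>L + M. \<forall>t\<in>L + M. \<psi> (s + t) = \<psi> s + \<psi> t"
  proof (intro ballI)
    fix s t assume "s \<in> L + M" "t \<in> L + M"
    then obtain l1 y1 l2 y2 where e: "l1 \<in> L" "l2 \<in> L" "y1 \<in> M" "y2 \<in> M" "s = l1 + y1" "t = l2 + y2"
      by (auto elim!: set_plus_elim)
    have "\<psi> (s + t) = \<psi> ((l1 + l2) + (y1 + y2))"
      using e by (simp add: algebra_simps)
    also have "\<dots> = \<phi> (y1 + y2)"
      using e by (intro \<psi> lattice_submoduleD(3)[OF L] lattice_submoduleD(3)[OF M])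
    also have "\<dots> = \<psi> s + \<psi> t"
      using e \<psi> add by simp
    finally show "\<psi> (s + t) = \<psi> s + \<psi> t" .
  qed
  with \<psi> show thesis
    using that by blast
qed

lemma hom_extends_vanishing_if_direct_primitive_sum:
  assumes L: "lattice_submodule L" and M: "lattice_submodule M"
    and disj: "L \<inter> M \<subseteq> {0}" and prim: "primitive_in (L + M) lattice_pts"
    and add: "\<forall>x\<in>M. \<forall>y\<in>M. \<phi> (x + y) = \<phi> x + (\<phi> y :: int)"
  shows "\<exists>f\<in>lattice_pts. (\<forall>l\<in>L. f \<bullet> l = 0) \<and> (\<forall>x\<in>M. f \<bullet> x = of_int (\<phi> x))"
proof -
  obtain \<psi> where \<psi>_add: "\<forall>s\<in>L + M. \<forall>t\<in>L + M. \<psi> (s + t) = \<psi> s + \<psi> t"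
    and \<psi>: "\<And>l y. l \<in> L \<Longrightarrow> y \<in> M \<Longrightarrow> \<psi> (l + y) = \<phi> y"
    using additive_extend_by_zero_on_direct_sum[OF L M disj add] by blast
  obtain f where f: "f \<in> lattice_pts" "\<forall>s\<in>L + M. f \<bullet> s = of_int (\<psi> s)"
    using primitive_submodule_hom_extends[OF lattice_submodule_set_plus[OF L M] prim \<psi>_add] by blast
  have f_sum: "f \<bullet> (l + y) = of_int (\<phi> y)" if "l \<in> L" "y \<in> M" for l y
    using f(2) \<psi>[OF that] set_plus_intro[OF that] by simp
  have "\<phi> 0 = 0"
    using additive_of_int_scale[OF M lattice_submoduleD(2)[OF M] add, of 0] by simp
  then have "f \<bullet> l = 0" if "l \<in> L" for l
    using f_sum[OF that lattice_submoduleD(2)[OF M]] by simp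
  moreover have "f \<bullet> y = of_int (\<phi> y)" if "y \<in> M" for y
    using f_sum[OF lattice_submoduleD(2)[OF L] that] by simp
  ultimately show ?thesis
    using f(1) by blast
qed

lemma Int_trivial_if_coordinates_extend:
  assumes coord: "\<And>i. \<exists>f. (\<forall>l\<in>L. f \<bullet> l = 0) \<and> (\<forall>x\<in>M. f \<bullet> x = x $ i)"
  shows "L \<inter> M \<subseteq> {0}"
proof
  fix z assume z: "z \<in> L \<inter> M"
  have "z $ i = 0" for i
  proof -
    obtain f where "\<forall>l\<in>L. f \<bullet> l = 0" "\<forall>x\<in>M. f \<bullet> x = x $ i"
      using coord by blast
    with z show ?thesis
      by auto
  qed
  then show "z \<in> {0}"
    by (simp add: vec_eq_iff)
qed

lemma primitive_sum_if_coordinates_extend: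
  assumes L: "primitive_in L lattice_pts" and M: "primitive_in M lattice_pts"
    and coord: "\<And>i. \<exists>f\<in>lattice_pts. (\<forall>l\<in>L. f \<bullet> l = 0) \<and> (\<forall>x\<in>M. f \<bullet> x = x $ i)"
  shows "primitive_in (L + M) lattice_pts"
  unfolding primitive_in_def
proof (intro conjI ballI allI impI)
  have "L \<subseteq> lattice_pts" "M \<subseteq> lattice_pts"
    using L M by (simp_all add: primitive_in_def)
  then show LM: "L + M \<subseteq> lattice_pts"
    by (auto simp: set_plus_def intro: lattice_pts_add)
  fix x and m :: int
  assume x: "x \<in> lattice_pts" and m: "m \<noteq> 0" and "of_int m *\<^sub>R x \<in> L + M"
  then obtain l y where l: "l \<in> L" and y: "y \<in> M" and mx: "of_int m *\<^sub>R x = l + y"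
    by (auto elim!: set_plus_elim)
  define y' where "y' = (1 / of_int m) *\<^sub>R y"
  \<comment> \<open>y = m x - l, and the functional f_i extending the i-th coordinate kills l\<close>
  have "y' $ i \<in> \<int>" for i
  proof -
    obtain f where f: "f \<in> lattice_pts" "\<forall>l\<in>L. f \<bullet> l = 0" "\<forall>x\<in>M. f \<bullet> x = x $ i"
      using coord by blast
    have "y $ i = of_int m * (f \<bullet> x)"
      using f l y arg_cong[OF mx, of "inner f"] by (simp add: inner_add_right)
    then show ?thesis
      using m lattice_pts_inner[OF f(1) x] by (simp add: y'_def)
  qed
  then have y'L: "y' \<in> lattice_pts"
    by (simp add: lattice_pts_def)
  moreover have "of_int m *\<^sub>R y' = y"
    using m by (simp add: y'_def)
  ultimately have y'M: "y' \<in> M"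
    using primitive_inD[OF M _ m] y by simp
  have "of_int m *\<^sub>R (x - y') = l"
    using mx m by (simp add: y'_def algebra_simps)
  then have "x - y' \<in> L"
    using primitive_inD[OF L lattice_pts_diff[OF x y'L] m] l by simp
  then show "x \<in> L + M"
    using y'M by (metis diff_add_cancel set_plus_intro)
qed

lemma hom_extends_vanishing_iff_direct_primitive_sum:
  assumes L: "lattice_submodule L" "primitive_in L lattice_pts"
    and M: "lattice_submodule M" "primitive_in M lattice_pts"
  shows "(\<forall>\<phi> :: real^'n \<Rightarrow> int. (\<forall>x\<in>M. \<forall>y\<in>M. \<phi> (x + y) = \<phi> x + \<phi> y) \<longrightarrow>
            (\<exists>f\<in>lattice_pts. (\<forall>l\<in>L. f \<bullet> l = 0) \<and> (\<forall>x\<in>M. f \<bullet> x = of_int (\<phi> x))))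
    \<longleftrightarrow> L \<inter> M \<subseteq> {0} \<and> primitive_in (L + M) lattice_pts"
proof
  assume ext: "\<forall>\<phi> :: real^'n \<Rightarrow> int. (\<forall>x\<in>M. \<forall>y\<in>M. \<phi> (x + y) = \<phi> x + \<phi> y) \<longrightarrow>
            (\<exists>f\<in>lattice_pts. (\<forall>l\<in>L. f \<bullet> l = 0) \<and> (\<forall>x\<in>M. f \<bullet> x = of_int (\<phi> x)))"
  have coord: "\<exists>f\<in>lattice_pts. (\<forall>l\<in>L. f \<bullet> l = 0) \<and> (\<forall>x\<in>M. f \<bullet> x = x $ i)" for i
  proof -
    have int: "of_int \<lfloor>x $ i\<rfloor> = x $ i" if "x \<in> M" for x
      using that lattice_submoduleD(1)[OF M(1)] by (auto simp: lattice_pts_def elim!: Ints_cases)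
    then have "\<forall>x\<in>M. \<forall>y\<in>M. \<lfloor>(x + y) $ i\<rfloor> = \<lfloor>x $ i\<rfloor> + \<lfloor>y $ i\<rfloor>"
      using lattice_submoduleD(3)[OF M(1)] by (metis of_int_add of_int_eq_iff vector_add_component)
    with ext[rule_format, of "\<lambda>x. \<lfloor>x $ i\<rfloor>"] obtain f where "f \<in> lattice_pts" "\<forall>l\<in>L. f \<bullet> l = 0" "\<forall>x\<in>M. f \<bullet> x = of_int \<lfloor>x $ i\<rfloor>"
      by blast
    with int show ?thesis
      by auto
  qed
  have "L \<inter> M \<subseteq> {0}"
    by (rule Int_trivial_if_coordinates_extend) (use coord in blast)
  then show "L \<inter> M \<subseteq> {0} \<and> primitive_in (L + M) lattice_pts"
    using primitive_sum_if_coordinates_extend[OF L(2) M(2) coord] by blast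
next
  assume "L \<inter> M \<subseteq> {0} \<and> primitive_in (L + M) lattice_pts"
  then show "\<forall>\<phi> :: real^'n \<Rightarrow> int. (\<forall>x\<in>M. \<forall>y\<in>M. \<phi> (x + y) = \<phi> x + \<phi> y) \<longrightarrow>
            (\<exists>f\<in>lattice_pts. (\<forall>l\<in>L. f \<bullet> l = 0) \<and> (\<forall>x\<in>M. f \<bullet> x = of_int (\<phi> x)))"
    using hom_extends_vanishing_if_direct_primitive_sum[OF L(1) M(1)] by simp
qed

lemma inj_on_iff_Int_lattice_kernel:
  assumes Q: "linear Q" and L: "lattice_submodule L"
  shows "inj_on Q L \<longleftrightarrow> L \<inter> {x \<in> lattice_pts. Q x = 0} \<subseteq> {0}"
proof
  assume inj: "inj_on Q L"
  show "L \<inter> {x \<in> lattice_pts. Q x = 0} \<subseteq> {0}"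
  proof
    fix x assume "x \<in> L \<inter> {x \<in> lattice_pts. Q x = 0}"
    then show "x \<in> {0}"
      using inj_onD[OF inj _ _ lattice_submoduleD(2)[OF L], of x] linear_0[OF Q] by auto
  qed
next
  assume triv: "L \<inter> {x \<in> lattice_pts. Q x = 0} \<subseteq> {0}"
  show "inj_on Q L"
  proof (rule inj_onI)
    fix x y assume "x \<in> L" "y \<in> L" "Q x = Q y"
    then have "x - y \<in> L \<inter> {x \<in> lattice_pts. Q x = 0}"
      using lattice_submodule_diff[OF L] lattice_submoduleD(1)[OF L] linear_diff[OF Q] by auto
    with triv show "x = y"
      by auto
  qed
qed

lemma primitive_image_iff_primitive_sum_kernel:
  assumes Q: "linear Q" and L: "lattice_submodule L"
  defines "M \<equiv> {x \<in> lattice_pts. Q x = 0}"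
  shows "primitive_in (Q ` L) (Q ` lattice_pts) \<longleftrightarrow> primitive_in (L + M) lattice_pts"
proof
  have LL: "L \<subseteq> lattice_pts"
    using L by (rule lattice_submoduleD)
  have sum_iff: "x \<in> L + M \<longleftrightarrow> Q x \<in> Q ` L" if "x \<in> lattice_pts" for x
  proof
    assume "x \<in> L + M"
    then obtain l y where "l \<in> L" "y \<in> M" "x = l + y"
      by (auto elim!: set_plus_elim)
    then show "Q x \<in> Q ` L"
      by (simp add: M_def linear_add[OF Q])
  next
    assume "Q x \<in> Q ` L"
    then obtain l where l: "l \<in> L" "Q x = Q l"
      by auto
    then have "x - l \<in> M"
      using LL that by (auto simp: M_def linear_diff[OF Q] intro: lattice_pts_diff)
    then show "x \<in> L + M"
      using l(1) by (metis add.commute diff_add_cancel set_plus_intro)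
  qed
  have scale: "of_int m *\<^sub>R Q x = Q (of_int m *\<^sub>R x)" for m x
    by (simp add: linear_scale[OF Q])
  have LM: "L + M \<subseteq> lattice_pts"
    using LL by (auto simp: M_def set_plus_def intro: lattice_pts_add)
  show "primitive_in (L + M) lattice_pts" if "primitive_in (Q ` L) (Q ` lattice_pts)"
    unfolding primitive_in_def
  proof (intro conjI LM ballI allI impI)
    fix x and m :: int
    assume x: "x \<in> lattice_pts" and m: "m \<noteq> 0" and "of_int m *\<^sub>R x \<in> L + M"
    then have "of_int m *\<^sub>R Q x \<in> Q ` L"
      using sum_iff lattice_pts_scale scale by metis
    then have "Q x \<in> Q ` L"
      by (rule primitive_inD[OF that imageI[OF x] m])
    then show "x \<in> L + M"
      using sum_iff x by blast
  qed
  show "primitive_in (Q ` L) (Q ` lattice_pts)" if "primitive_in (L + M) lattice_pts"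
    unfolding primitive_in_def
  proof (intro conjI ballI allI impI)
    show "Q ` L \<subseteq> Q ` lattice_pts"
      using LL by auto
    fix k and m :: int
    assume "k \<in> Q ` lattice_pts" and m: "m \<noteq> 0" and mk: "of_int m *\<^sub>R k \<in> Q ` L"
    then obtain x where x: "x \<in> lattice_pts" "k = Q x"
      by auto
    then have "Q (of_int m *\<^sub>R x) \<in> Q ` L"
      using mk scale by simp
    then have "of_int m *\<^sub>R x \<in> L + M"
      using sum_iff lattice_pts_scale[OF x(1)] by blast
    then have "x \<in> L + M"
      by (rule primitive_inD[OF that x(1) m])
    then show "k \<in> Q ` L"
      using sum_iff x by blast
  qed
qed

section \<open>Faces of simplicial cones and their duals\<close>

lemma rational_pts_scale_to_lattice:
  assumes "x \<in> rational_pts"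
  obtains k :: int where "k > 0" "of_int k *\<^sub>R x \<in> lattice_pts"
proof -
  have "\<exists>d::int. d > 0 \<and> of_int d * x $ i \<in> \<int>" for i
  proof -
    have "x $ i \<in> \<rat>"
      using assms by (simp add: rational_pts_def)
    then obtain p q :: int where "q > 0" "x $ i = of_int p / of_int q"
      by (rule Rats_cases')
    then show ?thesis
      by (intro exI[of _ q]) simp
  qed
  then obtain d where d: "\<And>i. d i > (0::int)" "\<And>i. of_int (d i) * x $ i \<in> \<int>"
    by metis
  define k where "k = prod d UNIV"
  have "of_int k * x $ i \<in> \<int>" for i
  proof -
    have "k = d i * prod d (UNIV - {i})"
      unfolding k_def by (simp add: prod.remove)
    then have "of_int k * x $ i = of_int (prod d (UNIV - {i})) * (of_int (d i) * x $ i)"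
      by simp
    also have "\<dots> \<in> \<int>"
      by (rule Ints_mult[OF Ints_of_int d(2)])
    finally show ?thesis .
  qed
  moreover have "k > 0"
    unfolding k_def using d(1) by (simp add: prod_pos)
  ultimately show thesis
    using that by (simp add: lattice_pts_def)
qed

lemma conic_gen_cone: "conic (gen_cone B)"
  unfolding conic_def gen_cone_def
proof (intro allI impI)
  fix x and t :: real
  assume "x \<in> {\<Sum>b\<in>B. c b *\<^sub>R b | c. \<forall>b\<in>B. 0 \<le> c b}" "0 \<le> t"
  then obtain c where "\<forall>b\<in>B. 0 \<le> c b" "x = (\<Sum>b\<in>B. c b *\<^sub>R b)"
    by blast
  with \<open>0 \<le> t\<close> show "t *\<^sub>R x \<in> {\<Sum>b\<in>B. c b *\<^sub>R b | c. \<forall>b\<in>B. 0 \<le> c b}"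
    by (intro CollectI exI[of _ "\<lambda>b. t * c b"]) (simp add: scaleR_sum_right)
qed

lemma gen_cone_sum_mem: "\<forall>b\<in>B. 0 \<le> c b \<Longrightarrow> (\<Sum>b\<in>B. c b *\<^sub>R b) \<in> gen_cone B"
  unfolding gen_cone_def by blast

lemma face_of_conic_summand:
  fixes S :: "'a::real_vector set"
  assumes S: "conic S" and F: "F face_of S" and uv: "u \<in> S" "v \<in> S" "u + v \<in> F"
  shows "u \<in> F"
proof -
  have "2 *\<^sub>R u \<in> F"
  proof (cases "u = v")
    case True
    then show ?thesis
      using uv(3) by (simp add: scaleR_2)
  next
    case False
    have "u + v = midpoint (2 *\<^sub>R u) (2 *\<^sub>R v)"
      by (simp add: midpoint_def scaleR_add_right [symmetric])
    then have "u + v \<in> open_segment (2 *\<^sub>R u) (2 *\<^sub>R v)"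
      using False by simp
    then show ?thesis
      using face_ofD[OF F] conic_mul[OF S] uv by simp
  qed
  then have "(1 / 2) *\<^sub>R (2 *\<^sub>R u) \<in> F"
    by (rule conic_mul[OF face_of_conic[OF S F]]) simp
  then show ?thesis
    by simp
qed

lemma gen_cone_face_coeff_eq_0:
  assumes B: "finite B" and F: "F face_of gen_cone B"
    and c: "\<forall>b\<in>B. 0 \<le> c b" "(\<Sum>b\<in>B. c b *\<^sub>R b) \<in> F" and b: "b \<in> B" "b \<notin> F"
  shows "c b = 0"
proof (rule ccontr)
  assume "c b \<noteq> 0"
  with c(1) b(1) have pos: "c b > 0"
    by force
  have "(\<Sum>b'\<in>B. (if b' = b then 1 else 0) *\<^sub>R b') = (\<Sum>b'\<in>B. if b' = b then b' else 0)"
    by (rule sum.cong) auto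
  then have bB: "b \<in> gen_cone B"
    using gen_cone_sum_mem[of B "\<lambda>b'. if b' = b then 1 else 0"] B b(1) by simp
  have "(\<Sum>b'\<in>B. c b' *\<^sub>R b') = c b *\<^sub>R b + (\<Sum>b'\<in>B. (c(b := 0)) b' *\<^sub>R b')"
    using B b(1) by (simp add: sum.remove)
  with c(2) have sum: "c b *\<^sub>R b + (\<Sum>b'\<in>B. (c(b := 0)) b' *\<^sub>R b') \<in> F"
    by simp
  have "(\<Sum>b'\<in>B. (c(b := 0)) b' *\<^sub>R b') \<in> gen_cone B"
    by (rule gen_cone_sum_mem) (use c(1) in auto)
  moreover have "c b *\<^sub>R b \<in> gen_cone B"
    by (rule conic_mul[OF conic_gen_cone bB]) (use pos in simp)
  ultimately have "c b *\<^sub>R b \<in> F"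
    using face_of_conic_summand[OF conic_gen_cone F _ _ sum] by blast
  then have "(1 / c b) *\<^sub>R (c b *\<^sub>R b) \<in> F"
    by (rule conic_mul[OF face_of_conic[OF conic_gen_cone F]]) (use pos in simp)
  with pos b(2) show False
    by simp
qed

lemma dual_basis_exists:
  fixes B :: "'a::euclidean_space set"
  assumes "independent B"
  obtains w where "\<And>b b'. b \<in> B \<Longrightarrow> b' \<in> B \<Longrightarrow> w b \<bullet> b' = (if b' = b then 1 else 0)"
proof -
  have "\<exists>w. \<forall>b'\<in>B. w \<bullet> b' = (if b' = b then 1 else 0)" for b
  proof -
    obtain g :: "'a \<Rightarrow> real" where g: "linear g" "\<forall>b'\<in>B. g b' = (if b' = b then 1 else 0)"
      using linear_independent_extend[OF assms, of "\<lambda>b'. if b' = b then 1 else 0"] by blast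
    have "adjoint g 1 \<bullet> x = g x" for x
      using adjoint_works[OF g(1), of x 1] by (simp add: inner_commute)
    with g(2) show ?thesis
      by (intro exI[of _ "adjoint g 1"]) simp
  qed
  then obtain w where "\<forall>b. \<forall>b'\<in>B. w b \<bullet> b' = (if b' = b then 1 else 0)"
    by metis
  then show thesis
    using that by blast
qed

lemma orthogonal_span_face_star:
  assumes "f \<in> span (face_star \<gamma> \<gamma>0)" "l \<in> span \<gamma>0"
  shows "f \<bullet> l = 0"
proof -
  have orth: "orthogonal d x" if "d \<in> face_star \<gamma> \<gamma>0" "x \<in> span \<gamma>0" for d x
    by (rule orthogonal_to_span[OF that(2)]) (use that(1) in \<open>auto simp: face_star_def orthogonal_def\<close>)
  have "orthogonal l f"
    by (rule orthogonal_to_span[OF assms(1)]) (use orth assms(2) orthogonal_commute in blast)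
  then show ?thesis
    by (simp add: orthogonal_def inner_commute)
qed

lemma mem_span_face_star_gen_cone:
  fixes B :: "(real^'n) set"
  assumes B: "finite B" "independent B" "span B = UNIV" and face: "\<gamma>0 face_of gen_cone B"
    and f: "\<forall>b\<in>B \<inter> \<gamma>0. f \<bullet> b = 0"
  shows "f \<in> span (face_star (gen_cone B) \<gamma>0)"
proof -
  obtain w where w: "\<And>b b'. b \<in> B \<Longrightarrow> b' \<in> B \<Longrightarrow> w b \<bullet> b' = (if b' = b then 1 else 0)"
    using dual_basis_exists[OF B(2)] by blast
  have w_coeff: "w b \<bullet> (\<Sum>b'\<in>B. c b' *\<^sub>R b') = c b" if "b \<in> B" for b c
  proof -
    have "w b \<bullet> (\<Sum>b'\<in>B. c b' *\<^sub>R b') = (\<Sum>b'\<in>B. c b' * (w b \<bullet> b'))"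
      by (simp add: inner_sum_right)
    also have "\<dots> = (\<Sum>b'\<in>B. if b' = b then c b' else 0)"
      using w[OF that] by (intro sum.cong) auto
    finally show ?thesis
      using B(1) that by simp
  qed
  have w_star: "w b \<in> face_star (gen_cone B) \<gamma>0" if b: "b \<in> B" "b \<notin> \<gamma>0" for b
    unfolding face_star_def dual_cone_def
  proof (intro CollectI conjI ballI)
    fix x assume "x \<in> gen_cone B"
    then obtain c where "\<forall>b\<in>B. 0 \<le> c b" "x = (\<Sum>b\<in>B. c b *\<^sub>R b)"
      by (auto simp: gen_cone_def)
    then show "0 \<le> w b \<bullet> x"
      using w_coeff[OF b(1)] b(1) by simp
  next
    fix x assume x: "x \<in> \<gamma>0"
    then have "x \<in> gen_cone B"
      using face_of_imp_subset[OF face] by blast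
    then obtain c where c: "\<forall>b\<in>B. 0 \<le> c b" "x = (\<Sum>b\<in>B. c b *\<^sub>R b)"
      by (auto simp: gen_cone_def)
    then show "w b \<bullet> x = 0"
      using w_coeff[OF b(1)] gen_cone_face_coeff_eq_0[OF B(1) face c(1) _ b] x by simp
  qed
  define g where "g = (\<Sum>b\<in>B. (f \<bullet> b) *\<^sub>R w b)"
  have fg_orth: "orthogonal (f - g) b" if "b \<in> B" for b
  proof -
    have "g \<bullet> b = (\<Sum>b'\<in>B. (f \<bullet> b') * (w b' \<bullet> b))"
      by (simp add: g_def inner_sum_left)
    also have "\<dots> = (\<Sum>b'\<in>B. if b' = b then f \<bullet> b' else 0)"
      using w that by (intro sum.cong) auto
    finally show ?thesis
      using B(1) that by (simp add: orthogonal_def inner_diff_left)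
  qed
  have "orthogonal (f - g) (f - g)"
    by (rule orthogonal_to_span[where S = B]) (simp_all add: B(3) fg_orth)
  then have "f = g"
    by (simp add: orthogonal_self)
  moreover have "g \<in> span (face_star (gen_cone B) \<gamma>0)"
    unfolding g_def
  proof (rule span_sum)
    fix b assume b: "b \<in> B"
    show "(f \<bullet> b) *\<^sub>R w b \<in> span (face_star (gen_cone B) \<gamma>0)"
    proof (cases "b \<in> \<gamma>0")
      case True
      then show ?thesis
        using f b by (simp add: span_zero)
    next
      case False
      then show ?thesis
        using w_star[OF b False] by (intro span_mul span_base)
    qed
  qed
  ultimately show ?thesis
    by simp
qed

lemma span_face_star_Int_lattice_pts:
  assumes cone: "simplicial_full_cone \<gamma>" and face: "\<gamma>0 face_of \<gamma>"
  shows "span (face_star \<gamma> \<gamma>0) \<inter> lattice_pts =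
    {f \<in> lattice_pts. \<forall>l\<in>span \<gamma>0 \<inter> lattice_pts. f \<bullet> l = 0}"
proof (intro equalityI subsetI)
  fix f assume "f \<in> span (face_star \<gamma> \<gamma>0) \<inter> lattice_pts"
  then show "f \<in> {f \<in> lattice_pts. \<forall>l\<in>span \<gamma>0 \<inter> lattice_pts. f \<bullet> l = 0}"
    using orthogonal_span_face_star by blast
next
  obtain B where B: "finite B" "independent B" "span B = UNIV" "B \<subseteq> rational_pts"
    and \<gamma>: "\<gamma> = gen_cone B"
    using cone unfolding simplicial_full_cone_def by blast
  fix f assume f: "f \<in> {f \<in> lattice_pts. \<forall>l\<in>span \<gamma>0 \<inter> lattice_pts. f \<bullet> l = 0}"
  have "f \<bullet> b = 0" if b: "b \<in> B \<inter> \<gamma>0" for b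
  proof -
    obtain k :: int where k: "k > 0" "of_int k *\<^sub>R b \<in> lattice_pts"
      using rational_pts_scale_to_lattice B(4) b by blast
    moreover have "of_int k *\<^sub>R b \<in> span \<gamma>0"
      using b by (intro span_mul span_base) auto
    ultimately have "f \<bullet> (of_int k *\<^sub>R b) = 0"
      using f by blast
    with k show ?thesis
      by simp
  qed
  then have "f \<in> span (face_star \<gamma> \<gamma>0)"
    using mem_span_face_star_gen_cone[OF B(1-3)] face \<gamma> by blast
  with f show "f \<in> span (face_star \<gamma> \<gamma>0) \<inter> lattice_pts"
    by blast
qed

theorem lemma3p7:
  fixes Q :: "real^'n \<Rightarrow> real^'k" and \<gamma> \<gamma>0 :: "(real^'n) set"
  assumes Qlin: "linear Q"
    and Qint: "\<forall>x\<in>lattice_pts. Q x \<in> lattice_pts"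
    and cone: "simplicial_full_cone \<gamma>"
    and face: "\<gamma>0 face_of \<gamma>" and ne: "\<gamma>0 \<noteq> {}"
  defines "K \<equiv> Q ` lattice_pts"
    and "M \<equiv> {x \<in> lattice_pts. Q x = 0}"
    and "\<delta>0 \<equiv> face_star \<gamma> \<gamma>0"
  shows "(\<forall>\<phi> :: real^'n \<Rightarrow> int.
            (\<forall>x\<in>M. \<forall>y\<in>M. \<phi> (x + y) = \<phi> x + \<phi> y) \<longrightarrow>
            (\<exists>f\<in>span \<delta>0 \<inter> lattice_pts. \<forall>x\<in>M. f \<bullet> x = of_int (\<phi> x)))
    \<longleftrightarrow> (inj_on Q (span \<gamma>0 \<inter> lattice_pts) \<and>
         primitive_in (Q ` (span \<gamma>0 \<inter> lattice_pts)) K)"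
proof -
  define L where "L = span \<gamma>0 \<inter> lattice_pts"
  have L: "lattice_submodule L" "primitive_in L lattice_pts"
    using lattice_submodule_Int_subspace[OF lattice_submodule_lattice_pts subspace_span]
      primitive_in_Int_subspace[OF primitive_in_lattice_pts subspace_span]
    by (simp_all add: L_def Int_commute)
  have M: "lattice_submodule M" "primitive_in M lattice_pts"
    using lattice_submodule_Int_subspace[OF lattice_submodule_lattice_pts linear_subspace_kernel[OF Qlin]]
      primitive_in_Int_subspace[OF primitive_in_lattice_pts linear_subspace_kernel[OF Qlin]]
    by (simp_all add: M_def Collect_conj_eq)
  have "span \<delta>0 \<inter> lattice_pts = {f \<in> lattice_pts. \<forall>l\<in>L. f \<bullet> l = 0}"
    unfolding \<delta>0_def L_def by (rule span_face_star_Int_lattice_pts[OF cone face])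
  then have "(\<exists>f\<in>span \<delta>0 \<inter> lattice_pts. P f) \<longleftrightarrow> (\<exists>f\<in>lattice_pts. (\<forall>l\<in>L. f \<bullet> l = 0) \<and> P f)"
    for P
    by blast
  then have "(\<forall>\<phi> :: real^'n \<Rightarrow> int. (\<forall>x\<in>M. \<forall>y\<in>M. \<phi> (x + y) = \<phi> x + \<phi> y) \<longrightarrow>
            (\<exists>f\<in>span \<delta>0 \<inter> lattice_pts. \<forall>x\<in>M. f \<bullet> x = of_int (\<phi> x)))
    \<longleftrightarrow> L \<inter> M \<subseteq> {0} \<and> primitive_in (L + M) lattice_pts"
    using hom_extends_vanishing_iff_direct_primitive_sum[OF L M] by simp
  also have "\<dots> \<longleftrightarrow> inj_on Q L \<and> primitive_in (Q ` L) K"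
    unfolding K_def M_def
    by (simp add: inj_on_iff_Int_lattice_kernel[OF Qlin L(1)]
        primitive_image_iff_primitive_sum_kernel[OF Qlin L(1)])
  finally show ?thesis
    unfolding L_def .
qed

end
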